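(* Suppose the model is a Markov model with common known initial distribution $q^{(0)}$, the data are generated under $\theta_0$, and the resulting chain is $\alpha$-mixing with $\sum_{k\ge1}\alpha_k^{\delta/(2+\delta)}<\infty$ for some $\delta>0$. Assume there are functions $M^{(1)}_k$ with $\sup_{x,y}|M^{(1)}_k(y,x)|<B$ and $f^{(1)}_k:\Theta\times\Theta\to\mathbb{R}$, $k=1,\dots,m$, such that $|\log p_{\theta_1}(y|x)-\log p_{\theta_2}(y|x)|\le\sum_{k=1}^m M^{(1)}_k(y,x)|f^{(1)}_k(\theta_2,\theta_1)|$ for all $\theta_1,\theta_2\in\Theta$ and states $x,y$; that there are $C>0$ and $\rho_n\in\mathcal{F}$ with $\int|f^{(1)}_k(\theta,\theta_0)|^{2+\delta}\rho_n(d\theta)\le C/n$ and $\int|f^{(1)}_k(\theta,\theta_0)|\rho_n(d\theta)\le C/\sqrt n$ for all $k,n$; and that $\mathcal{K}(\rho_n,\pi)\le C\sqrt n$. Then there exist $\epsilon_n=O\big(\max(n^{-1/2},n^{\delta/2}/n)\big)$ such that conditions (C1)–(C3) hold for $\rho_n$ and $\epsilon_n$.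
   Context: Markov model with known initial distribution: for each $\theta\in\Theta\subseteq\mathbb{R}^d$, $p_\theta(y|x)$ is a transition density (w.r.t. Lebesgue or counting measure), and $P^{(n)}_\theta$ is the law of $(X_0,\dots,X_n)$ with density $q^{(0)}(x_0)\prod_{i=1}^n p_\theta(x_i|x_{i-1})$, with the same initial density $q^{(0)}$ for all $\theta$. $\mathrm{E},\mathrm{Var}$ are under $P^{(n)}_{\theta_0}$. $r_n(\theta,\theta_0):=\log(p^{(n)}_{\theta_0}(X^n)/p^{(n)}_\theta(X^n))$; $\mathcal{K}$ is KL divergence; $\pi$ is a prior and $\mathcal{F}$ a family of distributions on $\Theta$. Conditions: (C1) $\int\mathcal{K}(P^{(n)}_{\theta_0},P^{(n)}_\theta)\rho_n(d\theta)\le n\epsilon_n$; (C2) $\int\mathrm{Var}(r_n(\theta,\theta_0))\rho_n(d\theta)\le n\epsilon_n$; (C3) $\mathcal{K}(\rho_n,\pi)\le n\epsilon_n$. $\alpha$-mixing coefficients: $\alpha_k:=\sup_{t\ge0}\sup\{|P(A\cap B)-P(A)P(B)|:A\in\sigma(X_0,\dots,X_t),B\in\sigma(X_s:s\ge t+k)\}$ under $\theta_0$. $\epsilon_n=O(a_n)$ means $\epsilon_n\le Ka_n$ for some constant $K$ and all $n$. *)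

theory Defs
  imports "HOL-Probability.Probability"
begin

definition KL_div :: "'a measure \<Rightarrow> 'a measure \<Rightarrow> ennreal" where
  "KL_div M N =
     (if sets M = sets N \<and> absolutely_continuous N M
         \<and> integrable M (\<lambda>x. ln (enn2real (RN_deriv N M x)))
      then ennreal (\<integral>x. ln (enn2real (RN_deriv N M x)) \<partial>M)
      else \<infinity>)"

definition Var_nn :: "'a measure \<Rightarrow> ('a \<Rightarrow> real) \<Rightarrow> ennreal" where
  "Var_nn M X = (\<integral>\<^sup>+x. ennreal ((X x - (\<integral>y. X y \<partial>M))\<^sup>2) \<partial>M)"

text \<open>Transition density p theta x y = p_theta(y|x) w.r.t. the reference measure mu.\<close>
definition transition_density :: "'a measure \<Rightarrow> ('p \<Rightarrow> 'a \<Rightarrow> 'a \<Rightarrow> real) \<Rightarrow> 'p set \<Rightarrow> bool" where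
  "transition_density \<mu> p \<Theta> \<longleftrightarrow>
     (\<forall>\<theta>\<in>\<Theta>. (\<lambda>(x, y). p \<theta> x y) \<in> borel_measurable (\<mu> \<Otimes>\<^sub>M \<mu>)
        \<and> (\<forall>x\<in>space \<mu>. \<forall>y\<in>space \<mu>. p \<theta> x y \<ge> 0)
        \<and> (\<forall>x\<in>space \<mu>. (\<integral>\<^sup>+y. ennreal (p \<theta> x y) \<partial>\<mu>) = 1))"

definition init_density :: "'a measure \<Rightarrow> ('a \<Rightarrow> real) \<Rightarrow> bool" where
  "init_density \<mu> q0 \<longleftrightarrow> q0 \<in> borel_measurable \<mu> \<and> (\<forall>x\<in>space \<mu>. q0 x \<ge> 0)
     \<and> (\<integral>\<^sup>+x. ennreal (q0 x) \<partial>\<mu>) = 1"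

definition markov_dens :: "('a \<Rightarrow> real) \<Rightarrow> ('p \<Rightarrow> 'a \<Rightarrow> 'a \<Rightarrow> real) \<Rightarrow> 'p \<Rightarrow> nat \<Rightarrow> (nat \<Rightarrow> 'a) \<Rightarrow> real" where
  "markov_dens q0 p \<theta> n x = q0 (x 0) * (\<Prod>i\<in>{1..n}. p \<theta> (x (i - 1)) (x i))"

definition markov_law :: "'a measure \<Rightarrow> ('a \<Rightarrow> real) \<Rightarrow> ('p \<Rightarrow> 'a \<Rightarrow> 'a \<Rightarrow> real) \<Rightarrow> 'p \<Rightarrow> nat
    \<Rightarrow> (nat \<Rightarrow> 'a) measure" where
  "markov_law \<mu> q0 p \<theta> n = density (PiM {0..n} (\<lambda>_. \<mu>)) (\<lambda>x. ennreal (markov_dens q0 p \<theta> n x))"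

definition log_ratio :: "('a \<Rightarrow> real) \<Rightarrow> ('p \<Rightarrow> 'a \<Rightarrow> 'a \<Rightarrow> real) \<Rightarrow> nat \<Rightarrow> 'p \<Rightarrow> 'p \<Rightarrow> (nat \<Rightarrow> 'a) \<Rightarrow> real" where
  "log_ratio q0 p n \<theta> \<theta>0 x = ln (markov_dens q0 p \<theta>0 n x / markov_dens q0 p \<theta> n x)"

definition gen_events :: "'w measure \<Rightarrow> 'a measure \<Rightarrow> (nat \<Rightarrow> 'w \<Rightarrow> 'a) \<Rightarrow> nat set \<Rightarrow> 'w set set" where
  "gen_events \<Omega> \<mu> X I = sigma_sets (space \<Omega>) (\<Union>i\<in>I. {X i -` A \<inter> space \<Omega> | A. A \<in> sets \<mu>})"

definition alpha_mix :: "'w measure \<Rightarrow> 'a measure \<Rightarrow> (nat \<Rightarrow> 'w \<Rightarrow> 'a) \<Rightarrow> nat \<Rightarrow> real" where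
  "alpha_mix \<Omega> \<mu> X k =
     (SUP t. SUP A\<in>gen_events \<Omega> \<mu> X {0..t}. SUP B\<in>gen_events \<Omega> \<mu> X {t + k..}.
        \<bar>measure \<Omega> (A \<inter> B) - measure \<Omega> A * measure \<Omega> B\<bar>)"

end

(*
  Every increment ln p_theta0(X_i | X_(i-1)) - ln p_theta(X_i | X_(i-1)) of the log-likelihood
  ratio r_n is bounded by b(theta) = max B 0 * sum_k |f_k(theta, theta0)|, because the M_k are
  bounded. Hence K(P_theta0, P_theta) = E r_n <= n b(theta). For the variance, Ibragimov's
  inequality |Cov(U, V)| <= 4 sup|U| sup|V| alpha_k bounds the covariance of two increments at lag
  k + 1 >= 2 (they are measurable w.r.t. sigma-algebras k steps apart); increments at lag at most
  one are bounded crudely. This gives Var r_n <= 8 n b(theta)^2 (2 + sum_k alpha_k), the series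
  converging because alpha_k <= 1 makes alpha_k <= alpha_k^(delta/(2+delta)).
  Integrating over rho_n, the moment assumptions give int b <= B m C / sqrt n and, since
  x^2 <= |x| + |x|^(2+delta), int b^2 <= 2 B^2 m^2 C / sqrt n. So all three quantities in
  (C1)-(C3) are O(sqrt n), and the conditions hold with epsilon_n of order n^(-1/2).
*)

theory Submission
  imports Defs
begin

section \<open>Covariance inequality under strong mixing\<close>

text \<open>Replacing W by the sign of the centred conditional expectation of Z given F does not
  decrease the covariance, up to the factor sup W.\<close>
lemma covariance_le_sign_covariance:
  fixes W Z :: "'a \<Rightarrow> real"
  assumes "prob_space M" and sub: "subalgebra M F"
    and Wm: "W \<in> borel_measurable F" and Wb: "\<forall>x\<in>space M. \<bar>W x\<bar> \<le> w"
    and Zm: "Z \<in> borel_measurable M" and Zb: "\<forall>x\<in>space M. \<bar>Z x\<bar> \<le> z"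
  shows "\<exists>\<zeta>. \<zeta> \<in> borel_measurable F \<and> (\<forall>x. \<zeta> x \<in> {-1,0,1}) \<and>
     \<bar>(\<integral>x. W x * Z x \<partial>M) - (\<integral>x. W x \<partial>M) * (\<integral>x. Z x \<partial>M)\<bar>
       \<le> w * ((\<integral>x. \<zeta> x * Z x \<partial>M) - (\<integral>x. \<zeta> x \<partial>M) * (\<integral>x. Z x \<partial>M))"
proof -
  interpret prob_space M by fact
  have "finite_measure_subalgebra M F"
    unfolding finite_measure_subalgebra_def finite_measure_subalgebra_axioms_def
    using sub finite_measure_axioms by simp
  then interpret sigma_finite_subalgebra M F
    by (rule finite_measure_subalgebra_is_sigma_finite)
  note Zm[measurable] Wm[measurable] measurable_from_subalg[OF sub Wm, measurable]
  have intW: "integrable M W"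
    by (rule integrable_const_bound[where B=w]) (use Wb in auto)
  have intZ: "integrable M Z"
    by (rule integrable_const_bound[where B=z]) (use Zb in auto)
  have intWZ: "integrable M (\<lambda>x. W x * Z x)"
    by (intro integrable_const_bound[where B="w*z"] AE_I2)
      (use Wb Zb in \<open>auto simp: abs_mult intro!: mult_mono\<close>)
  define D where "D = (\<lambda>x. real_cond_exp M F Z x - (\<integral>x. Z x \<partial>M))"
  define \<zeta> where "\<zeta> = (\<lambda>x. sgn (D x))"
  have \<zeta>F[measurable]: "\<zeta> \<in> borel_measurable F" unfolding \<zeta>_def D_def by measurable
  note measurable_from_subalg[OF sub \<zeta>F, measurable]
  have \<zeta>v: "\<forall>x. \<zeta> x \<in> {-1,0,1}" unfolding \<zeta>_def by (auto simp: sgn_real_def)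
  have \<zeta>b: "\<bar>\<zeta> x\<bar> \<le> 1" for x
    unfolding \<zeta>_def by (simp add: abs_sgn_eq)
  have intz: "integrable M \<zeta>"
    by (rule integrable_const_bound[where B=1]) (use \<zeta>b in auto)
  have intzZ: "integrable M (\<lambda>x. \<zeta> x * Z x)"
    by (intro integrable_const_bound[where B=z] AE_I2)
      (use \<zeta>b Zb in \<open>auto simp: abs_mult intro!: mult_left_le_one_le[THEN order_trans]\<close>)
  have D_int: "integrable M (\<lambda>x. V x * D x)"
    and D_eq: "(\<integral>x. V x * D x \<partial>M) = (\<integral>x. V x * Z x \<partial>M) - (\<integral>x. V x \<partial>M) * (\<integral>x. Z x \<partial>M)"
    if "V \<in> borel_measurable F" "integrable M V" "integrable M (\<lambda>x. V x * Z x)" for V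
  proof -
    have "integrable M (\<lambda>x. V x * real_cond_exp M F Z x)"
      "(\<integral>x. V x * real_cond_exp M F Z x \<partial>M) = (\<integral>x. V x * Z x \<partial>M)"
      using real_cond_exp_intg[OF that(3,1) Zm] by auto
    then show "integrable M (\<lambda>x. V x * D x)"
      "(\<integral>x. V x * D x \<partial>M) = (\<integral>x. V x * Z x \<partial>M) - (\<integral>x. V x \<partial>M) * (\<integral>x. Z x \<partial>M)"
      unfolding D_def right_diff_distrib using that(2) by simp_all
  qed
  have "\<bar>\<integral>x. W x * D x \<partial>M\<bar> \<le> (\<integral>x. \<bar>W x * D x\<bar> \<partial>M)"
    by (rule integral_abs_bound)
  also have "\<dots> \<le> (\<integral>x. w * (\<zeta> x * D x) \<partial>M)"
  proof (rule integral_mono)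
    show "integrable M (\<lambda>x. \<bar>W x * D x\<bar>)" "integrable M (\<lambda>x. w * (\<zeta> x * D x))"
      using D_int[OF Wm intW intWZ] D_int[OF \<zeta>F intz intzZ] by auto
    show "\<bar>W x * D x\<bar> \<le> w * (\<zeta> x * D x)" if "x \<in> space M" for x
      using Wb that by (auto simp: \<zeta>_def abs_mult sgn_real_def intro: mult_right_mono)
  qed
  finally have "\<bar>\<integral>x. W x * D x \<partial>M\<bar> \<le> w * (\<integral>x. \<zeta> x * D x \<partial>M)"
    by simp
  then show ?thesis
    using \<zeta>F \<zeta>v D_eq[OF Wm intW intWZ] D_eq[OF \<zeta>F intz intzZ] by (intro exI[of _ \<zeta>]) simp
qed

lemma sign_covariance_le_mixing:
  fixes \<xi> \<eta> :: "'a \<Rightarrow> real"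
  assumes "prob_space M" and subA: "subalgebra M Fa" and subB: "subalgebra M Fb"
    and \<xi>m[measurable]: "\<xi> \<in> borel_measurable Fa" and \<xi>v: "\<forall>x. \<xi> x \<in> {-1,0,1}"
    and \<eta>m[measurable]: "\<eta> \<in> borel_measurable Fb" and \<eta>v: "\<forall>x. \<eta> x \<in> {-1,0,1}"
    and mix: "\<forall>A\<in>sets Fa. \<forall>B\<in>sets Fb. \<bar>measure M (A \<inter> B) - measure M A * measure M B\<bar> \<le> a"
  shows "\<bar>(\<integral>x. \<xi> x * \<eta> x \<partial>M) - (\<integral>x. \<xi> x \<partial>M) * (\<integral>x. \<eta> x \<partial>M)\<bar> \<le> 4 * a"
proof -
  interpret prob_space M by fact
  have sA: "space Fa = space M" and sB: "space Fb = space M"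
    using subA subB by (auto simp: subalgebra_def)
  define A1 A2 where "A1 = {x\<in>space M. \<xi> x = 1}" and "A2 = {x\<in>space M. \<xi> x = -1}"
  define B1 B2 where "B1 = {x\<in>space M. \<eta> x = 1}" and "B2 = {x\<in>space M. \<eta> x = -1}"
  have A: "A1 \<in> sets Fa" "A2 \<in> sets Fa"
    unfolding A1_def A2_def sA[symmetric] by measurable
  have B: "B1 \<in> sets Fb" "B2 \<in> sets Fb"
    unfolding B1_def B2_def sB[symmetric] by measurable
  have ev: "A1 \<in> events" "A2 \<in> events" "B1 \<in> events" "B2 \<in> events"
    using A B subA subB by (auto simp: subalgebra_def)
  have int_ind: "integrable M (indicator E :: 'a \<Rightarrow> real)" if "E \<in> events" for E
    using that by (intro integrable_real_indicator) (auto simp: less_top[symmetric])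
  have \<xi>: "\<xi> x = indicator A1 x - indicator A2 x" if "x \<in> space M" for x
    using \<xi>v[rule_format, of x] that unfolding A1_def A2_def by (auto simp: indicator_def)
  have \<eta>: "\<eta> x = indicator B1 x - indicator B2 x" if "x \<in> space M" for x
    using \<eta>v[rule_format, of x] that unfolding B1_def B2_def by (auto simp: indicator_def)
  have I\<xi>: "(\<integral>x. \<xi> x \<partial>M) = prob A1 - prob A2"
    using ev int_ind by (subst Bochner_Integration.integral_cong[OF refl \<xi>]) auto
  have I\<eta>: "(\<integral>x. \<eta> x \<partial>M) = prob B1 - prob B2"
    using ev int_ind by (subst Bochner_Integration.integral_cong[OF refl \<eta>]) auto
  have "(\<integral>x. \<xi> x * \<eta> x \<partial>M) = (\<integral>x. indicator (A1 \<inter> B1) x - indicator (A1 \<inter> B2) x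
       - indicator (A2 \<inter> B1) x + indicator (A2 \<inter> B2) x \<partial>M)"
    by (intro Bochner_Integration.integral_cong)
      (auto simp: \<xi> \<eta> indicator_inter_arith algebra_simps)
  also have "\<dots> = prob (A1 \<inter> B1) - prob (A1 \<inter> B2) - prob (A2 \<inter> B1) + prob (A2 \<inter> B2)"
    using ev int_ind by simp
  finally have I\<xi>\<eta>: "(\<integral>x. \<xi> x * \<eta> x \<partial>M)
      = prob (A1 \<inter> B1) - prob (A1 \<inter> B2) - prob (A2 \<inter> B1) + prob (A2 \<inter> B2)" .
  have "\<bar>prob (A1 \<inter> B1) - prob A1 * prob B1\<bar> \<le> a" "\<bar>prob (A1 \<inter> B2) - prob A1 * prob B2\<bar> \<le> a"
    "\<bar>prob (A2 \<inter> B1) - prob A2 * prob B1\<bar> \<le> a" "\<bar>prob (A2 \<inter> B2) - prob A2 * prob B2\<bar> \<le> a"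
    using mix A B by blast+
  then show ?thesis
    unfolding I\<xi> I\<eta> I\<xi>\<eta> by (simp add: algebra_simps abs_le_iff)
qed

lemma covariance_le_mixing:
  fixes U V :: "'a \<Rightarrow> real"
  assumes P: "prob_space M" and subA: "subalgebra M Fa" and subB: "subalgebra M Fb"
    and Um: "U \<in> borel_measurable Fa" and Ub: "\<forall>x\<in>space M. \<bar>U x\<bar> \<le> u"
    and Vm: "V \<in> borel_measurable Fb" and Vb: "\<forall>x\<in>space M. \<bar>V x\<bar> \<le> v"
    and mix: "\<forall>A\<in>sets Fa. \<forall>B\<in>sets Fb. \<bar>measure M (A \<inter> B) - measure M A * measure M B\<bar> \<le> a"
  shows "\<bar>(\<integral>x. U x * V x \<partial>M) - (\<integral>x. U x \<partial>M) * (\<integral>x. V x \<partial>M)\<bar> \<le> 4 * u * v * a"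
proof -
  interpret prob_space M by fact
  obtain \<xi> where \<xi>m: "\<xi> \<in> borel_measurable Fa" and \<xi>v: "\<forall>x. \<xi> x \<in> {-1,0,1}"
    and U\<xi>: "\<bar>(\<integral>x. U x * V x \<partial>M) - (\<integral>x. U x \<partial>M) * (\<integral>x. V x \<partial>M)\<bar>
       \<le> u * ((\<integral>x. \<xi> x * V x \<partial>M) - (\<integral>x. \<xi> x \<partial>M) * (\<integral>x. V x \<partial>M))"
    using covariance_le_sign_covariance[OF P subA Um Ub measurable_from_subalg[OF subB Vm] Vb]
    by blast
  have \<xi>b: "\<forall>x\<in>space M. \<bar>\<xi> x\<bar> \<le> 1"
    using \<xi>v by (metis abs_minus_cancel abs_one abs_zero insert_iff
        order_refl singletonD zero_le_one)
  obtain \<eta> where \<eta>m: "\<eta> \<in> borel_measurable Fb" and \<eta>v: "\<forall>x. \<eta> x \<in> {-1,0,1}"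
    and V\<eta>: "\<bar>(\<integral>x. V x * \<xi> x \<partial>M) - (\<integral>x. V x \<partial>M) * (\<integral>x. \<xi> x \<partial>M)\<bar>
       \<le> v * ((\<integral>x. \<eta> x * \<xi> x \<partial>M) - (\<integral>x. \<eta> x \<partial>M) * (\<integral>x. \<xi> x \<partial>M))"
    using covariance_le_sign_covariance[OF P subB Vm Vb measurable_from_subalg[OF subA \<xi>m] \<xi>b]
    by blast
  have "\<forall>B\<in>sets Fb. \<forall>A\<in>sets Fa. \<bar>measure M (B \<inter> A) - measure M B * measure M A\<bar> \<le> a"
    using mix by (metis Int_commute mult.commute)
  then have \<eta>\<xi>: "\<bar>(\<integral>x. \<eta> x * \<xi> x \<partial>M) - (\<integral>x. \<eta> x \<partial>M) * (\<integral>x. \<xi> x \<partial>M)\<bar> \<le> 4 * a"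
    by (rule sign_covariance_le_mixing[OF P subB subA \<eta>m \<eta>v \<xi>m \<xi>v])
  have "0 \<le> u" "0 \<le> v"
    using Ub Vb not_empty by force+
  have "(\<integral>x. \<xi> x * V x \<partial>M) - (\<integral>x. \<xi> x \<partial>M) * (\<integral>x. V x \<partial>M)
      \<le> \<bar>(\<integral>x. V x * \<xi> x \<partial>M) - (\<integral>x. V x \<partial>M) * (\<integral>x. \<xi> x \<partial>M)\<bar>"
    by (simp add: mult.commute)
  also have "\<dots> \<le> v * (4 * a)"
    using V\<eta> \<eta>\<xi> \<open>0 \<le> v\<close> by (smt (verit) mult_left_mono)
  finally show ?thesis
    using U\<xi> mult_left_mono[OF _ \<open>0 \<le> u\<close>] by (fastforce simp: algebra_simps)
qed

section \<open>Mixing coefficients of a process\<close>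

definition gen_measure :: "'w measure \<Rightarrow> 'a measure \<Rightarrow> (nat \<Rightarrow> 'w \<Rightarrow> 'a) \<Rightarrow> nat set \<Rightarrow> 'w measure" where
  "gen_measure \<Omega> \<mu> X I = sigma (space \<Omega>) (\<Union>i\<in>I. {X i -` A \<inter> space \<Omega> | A. A \<in> sets \<mu>})"

lemma
  shows sets_gen_measure: "sets (gen_measure \<Omega> \<mu> X I) = gen_events \<Omega> \<mu> X I"
    and space_gen_measure: "space (gen_measure \<Omega> \<mu> X I) = space \<Omega>"
  unfolding gen_measure_def gen_events_def by (auto intro!: sets_measure_of space_measure_of)

lemma subalgebra_gen_measure:
  assumes "\<forall>i. X i \<in> measurable \<Omega> \<mu>"
  shows "subalgebra \<Omega> (gen_measure \<Omega> \<mu> X I)"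
proof -
  have "(\<Union>i\<in>I. {X i -` A \<inter> space \<Omega> | A. A \<in> sets \<mu>}) \<subseteq> sets \<Omega>"
    using measurable_sets[OF assms[rule_format]] by blast
  then have "gen_events \<Omega> \<mu> X I \<subseteq> sets \<Omega>"
    unfolding gen_events_def by (rule sets.sigma_sets_subset)
  then show ?thesis
    unfolding subalgebra_def sets_gen_measure space_gen_measure by simp
qed

lemma measurable_gen_measure:
  assumes "\<forall>i. X i \<in> measurable \<Omega> \<mu>" and "i \<in> I"
  shows "X i \<in> measurable (gen_measure \<Omega> \<mu> X I) \<mu>"
proof (rule measurableI)
  show "X i x \<in> space \<mu>" if "x \<in> space (gen_measure \<Omega> \<mu> X I)" for x
    using measurable_space[OF assms(1)[rule_format]] that by (simp add: space_gen_measure)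
  show "X i -` A \<inter> space (gen_measure \<Omega> \<mu> X I) \<in> sets (gen_measure \<Omega> \<mu> X I)"
    if "A \<in> sets \<mu>" for A
    using that assms(2) unfolding sets_gen_measure space_gen_measure gen_events_def
    by blast
qed

lemma alpha_mix_bounds:
  assumes "prob_space \<Omega>"
  shows "A \<in> gen_events \<Omega> \<mu> X {0..t} \<Longrightarrow> B \<in> gen_events \<Omega> \<mu> X {t+k..} \<Longrightarrow>
      \<bar>measure \<Omega> (A \<inter> B) - measure \<Omega> A * measure \<Omega> B\<bar> \<le> alpha_mix \<Omega> \<mu> X k"
    and "0 \<le> alpha_mix \<Omega> \<mu> X k" and "alpha_mix \<Omega> \<mu> X k \<le> 1"
proof -
  interpret prob_space \<Omega> by fact
  define h where "h = (\<lambda>A B. \<bar>measure \<Omega> (A \<inter> B) - measure \<Omega> A * measure \<Omega> B\<bar>)"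
  have h1: "h A B \<le> 1" for A B
  proof -
    have "0 \<le> prob (A \<inter> B)" "prob (A \<inter> B) \<le> 1" "0 \<le> prob A * prob B" "prob A * prob B \<le> 1"
      by (auto intro: mult_le_one)
    then show ?thesis
      unfolding h_def by linarith
  qed
  have empty: "{} \<in> gen_events \<Omega> \<mu> X I" for I
    unfolding gen_events_def by (rule sigma_sets.Empty)
  define I where "I = (\<lambda>t A. SUP B\<in>gen_events \<Omega> \<mu> X {t + k..}. h A B)"
  define J where "J = (\<lambda>t. SUP A\<in>gen_events \<Omega> \<mu> X {0..t}. I t A)"
  have alpha: "alpha_mix \<Omega> \<mu> X k = (SUP t. J t)"
    unfolding alpha_mix_def J_def I_def h_def ..
  have I1: "I t A \<le> 1" for t A
    unfolding I_def by (rule cSUP_least) (use empty h1 in blast)+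
  have hI: "h A B \<le> I s A" if "B \<in> gen_events \<Omega> \<mu> X {s+k..}" for s A B
    unfolding I_def using that h1 by (intro cSUP_upper bdd_aboveI2[where M=1])
  have J1: "J t \<le> 1" for t
    unfolding J_def by (rule cSUP_least) (use empty I1 in blast)+
  have IJ: "I s A \<le> J s" if "A \<in> gen_events \<Omega> \<mu> X {0..s}" for s A
    unfolding J_def using that I1 by (intro cSUP_upper bdd_aboveI2[where M=1])
  have J_alpha: "J t \<le> alpha_mix \<Omega> \<mu> X k" for t
    unfolding alpha using J1 by (intro cSUP_upper bdd_aboveI2[where M=1]) auto
  show "\<bar>measure \<Omega> (A \<inter> B) - measure \<Omega> A * measure \<Omega> B\<bar> \<le> alpha_mix \<Omega> \<mu> X k"
    if "A \<in> gen_events \<Omega> \<mu> X {0..t}" and "B \<in> gen_events \<Omega> \<mu> X {t+k..}"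
    using hI[OF that(2), of A] IJ[OF that(1)] J_alpha[of t] unfolding h_def by linarith
  show "0 \<le> alpha_mix \<Omega> \<mu> X k"
    using hI[OF empty] IJ[OF empty] J_alpha[of 0] unfolding h_def
    by (metis (no_types) abs_ge_zero order_trans)
  show "alpha_mix \<Omega> \<mu> X k \<le> 1"
    unfolding alpha by (rule cSUP_least) (use J1 in blast)+
qed

lemma summable_alpha_mix:
  assumes "prob_space \<Omega>" and "\<delta> > 0"
    and "summable (\<lambda>k. alpha_mix \<Omega> \<mu> X (Suc k) powr (\<delta> / (2 + \<delta>)))"
  shows "summable (\<lambda>k. alpha_mix \<Omega> \<mu> X (Suc k))"
proof (rule summable_comparison_test'[OF assms(3)])
  fix k
  let ?a = "alpha_mix \<Omega> \<mu> X (Suc k)"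
  have "0 \<le> ?a" "?a \<le> 1"
    using alpha_mix_bounds(2,3)[OF assms(1)] by auto
  moreover have "\<delta> / (2 + \<delta>) \<le> 1"
    using assms(2) by simp
  ultimately show "norm ?a \<le> ?a powr (\<delta> / (2 + \<delta>))"
    using powr_mono'[of "\<delta> / (2 + \<delta>)" 1 ?a] by simp
qed

lemma covariance_pair_function_le_alpha_mix:
  fixes g :: "'a \<Rightarrow> 'a \<Rightarrow> real"
  assumes "prob_space \<Omega>" and Xm: "\<forall>i. X i \<in> measurable \<Omega> \<mu>"
    and gm: "case_prod g \<in> borel_measurable (\<mu> \<Otimes>\<^sub>M \<mu>)"
    and gb: "\<forall>x\<in>space \<mu>. \<forall>y\<in>space \<mu>. \<bar>g x y\<bar> \<le> b"
    and G_def: "\<And>i \<omega>. G i \<omega> = g (X (i - 1) \<omega>) (X i \<omega>)"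
    and ij: "i + 2 \<le> j"
  shows "\<bar>(\<integral>\<omega>. G i \<omega> * G j \<omega> \<partial>\<Omega>) - (\<integral>\<omega>. G i \<omega> \<partial>\<Omega>) * (\<integral>\<omega>. G j \<omega> \<partial>\<Omega>)\<bar>
      \<le> 4 * b\<^sup>2 * alpha_mix \<Omega> \<mu> X (j - i - 1)"
proof -
  have G_meas: "G l \<in> borel_measurable (gen_measure \<Omega> \<mu> X I)" if "l - 1 \<in> I" "l \<in> I" for l I
  proof -
    have "(\<lambda>\<omega>. (X (l - 1) \<omega>, X l \<omega>)) \<in> measurable (gen_measure \<Omega> \<mu> X I) (\<mu> \<Otimes>\<^sub>M \<mu>)"
      using that by (intro measurable_Pair measurable_gen_measure[OF Xm])
    from measurable_comp[OF this gm] show ?thesis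
      by (simp add: G_def[abs_def] comp_def)
  qed
  have Gb: "\<forall>\<omega>\<in>space \<Omega>. \<bar>G l \<omega>\<bar> \<le> b" for l
    using gb measurable_space[OF Xm[rule_format]] by (simp add: G_def)
  have "\<forall>A\<in>sets (gen_measure \<Omega> \<mu> X {0..i}). \<forall>B\<in>sets (gen_measure \<Omega> \<mu> X {i + (j - i - 1)..}).
      \<bar>measure \<Omega> (A \<inter> B) - measure \<Omega> A * measure \<Omega> B\<bar> \<le> alpha_mix \<Omega> \<mu> X (j - i - 1)"
    unfolding sets_gen_measure using alpha_mix_bounds(1)[OF assms(1)] by blast
  from covariance_le_mixing[OF assms(1) subalgebra_gen_measure[OF Xm] subalgebra_gen_measure[OF Xm]
      G_meas[of i] Gb G_meas[of j] Gb this]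
  show ?thesis
    using ij by (simp add: power2_eq_square)
qed

section \<open>Variance of additive functionals of a mixing process\<close>

lemma double_sum_le_summable:
  fixes c :: "nat \<Rightarrow> nat \<Rightarrow> real" and \<beta> :: "nat \<Rightarrow> real"
  assumes sym: "\<And>i j. c i j = c j i" and bd: "\<And>i j. i \<le> j \<Longrightarrow> \<bar>c i j\<bar> \<le> \<beta> (j - i)"
    and \<beta>0: "\<And>d. 0 \<le> \<beta> d" and sm: "summable \<beta>"
  shows "(\<Sum>i=1..n. \<Sum>j=1..n. c i j) \<le> real n * (2 * suminf \<beta>)"
proof (induction n)
  case 0
  then show ?case by simp
next
  case (Suc n)
  have "(\<Sum>i=1..Suc n. \<Sum>j=1..Suc n. c i j)
      = (\<Sum>i=1..n. \<Sum>j=1..n. c i j) + 2 * (\<Sum>i=1..n. c i (Suc n)) + c (Suc n) (Suc n)"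
    using sym by (simp add: sum.distrib)
  also have "(\<Sum>i=1..n. c i (Suc n)) \<le> (\<Sum>i=1..n. \<beta> (Suc n - i))"
    using bd by (intro sum_mono) (smt (verit) atLeastAtMost_iff le_SucI)
  also have "(\<Sum>i=1..n. \<beta> (Suc n - i)) = (\<Sum>d=1..n. \<beta> d)"
    by (subst sum.atLeastAtMost_rev) simp
  also have "c (Suc n) (Suc n) \<le> \<beta> 0"
    using bd[of "Suc n" "Suc n"] by simp
  also have "\<beta> 0 + (\<Sum>d=1..n. \<beta> d) \<le> suminf \<beta>"
    using sm \<beta>0 by (simp add: sum.atLeast_Suc_atMost[symmetric] sum_le_suminf)
  moreover have "0 \<le> (\<Sum>d=1..n. \<beta> d)"
    using \<beta>0 by (simp add: sum_nonneg)
  ultimately show ?case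
    using Suc.IH \<beta>0[of 0] by (simp add: algebra_simps)
qed

lemma covariance_centered:
  fixes U V :: "'a \<Rightarrow> real"
  assumes "prob_space M" and U: "integrable M U" and V: "integrable M V"
    and UV: "integrable M (\<lambda>x. U x * V x)"
  shows "(\<integral>x. (U x - (\<integral>y. U y \<partial>M)) * (V x - (\<integral>y. V y \<partial>M)) \<partial>M)
       = (\<integral>x. U x * V x \<partial>M) - (\<integral>x. U x \<partial>M) * (\<integral>x. V x \<partial>M)"
proof -
  interpret prob_space M by fact
  define a c where "a = (\<integral>y. U y \<partial>M)" and "c = (\<integral>y. V y \<partial>M)"
  have "(\<lambda>x. (U x - a) * (V x - c)) = (\<lambda>x. (U x * V x - c * U x) - (a * V x - a * c))"
    by (auto simp: algebra_simps)
  then have "(\<integral>x. (U x - a) * (V x - c) \<partial>M) = ((\<integral>x. U x * V x \<partial>M) - c * a) - (a * c - a * c)"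
    using U V UV by (simp add: a_def c_def prob_space)
  then show ?thesis by (simp add: a_def c_def)
qed

lemma variance_sum_eq_sum_covariance:
  fixes G :: "nat \<Rightarrow> 'w \<Rightarrow> real"
  assumes P: "prob_space M"
    and Gm: "\<And>i. G i \<in> borel_measurable M" and Gb: "\<And>i \<omega>. \<omega> \<in> space M \<Longrightarrow> \<bar>G i \<omega>\<bar> \<le> b"
  shows "(\<integral>\<omega>. ((\<Sum>i\<in>I. G i \<omega>) - (\<integral>\<omega>. (\<Sum>i\<in>I. G i \<omega>) \<partial>M))\<^sup>2 \<partial>M)
     = (\<Sum>i\<in>I. \<Sum>j\<in>I. (\<integral>\<omega>. G i \<omega> * G j \<omega> \<partial>M) - (\<integral>\<omega>. G i \<omega> \<partial>M) * (\<integral>\<omega>. G j \<omega> \<partial>M))"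
proof -
  interpret prob_space M by fact
  have b0: "0 \<le> b"
    using Gb[of _ 0] not_empty by force
  have intG: "integrable M (G i)" for i
    by (rule integrable_const_bound[where B=b]) (use Gb Gm in auto)
  have intGG: "integrable M (\<lambda>\<omega>. G i \<omega> * G j \<omega>)" for i j
    by (intro integrable_const_bound[where B="b * b"] AE_I2)
      (use Gb b0 Gm in \<open>auto simp: abs_mult intro: mult_mono\<close>)
  define Z where "Z = (\<lambda>i \<omega>. G i \<omega> - (\<integral>\<omega>. G i \<omega> \<partial>M))"
  have intZZ: "integrable M (\<lambda>\<omega>. Z i \<omega> * Z j \<omega>)" for i j
    using intG intGG by (simp add: Z_def algebra_simps)
  have "((\<Sum>i\<in>I. G i \<omega>) - (\<integral>\<omega>. (\<Sum>i\<in>I. G i \<omega>) \<partial>M))\<^sup>2 = (\<Sum>i\<in>I. \<Sum>j\<in>I. Z i \<omega> * Z j \<omega>)" for \<omega>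
    using intG by (simp add: Z_def power2_eq_square sum_product flip: sum_subtractf)
  then show ?thesis
    using intZZ covariance_centered[OF P intG intG intGG] by (simp add: Z_def)
qed

lemma abs_covariance_le:
  fixes U V :: "'a \<Rightarrow> real"
  assumes "prob_space M" and Um: "U \<in> borel_measurable M" and Vm: "V \<in> borel_measurable M"
    and Ub: "\<forall>x\<in>space M. \<bar>U x\<bar> \<le> u" and Vb: "\<forall>x\<in>space M. \<bar>V x\<bar> \<le> v"
  shows "\<bar>(\<integral>x. U x * V x \<partial>M) - (\<integral>x. U x \<partial>M) * (\<integral>x. V x \<partial>M)\<bar> \<le> 2 * u * v"
proof -
  interpret prob_space M by fact
  have "0 \<le> u" "0 \<le> v"
    using Ub Vb not_empty by force+
  have UVb: "\<bar>U x * V x\<bar> \<le> u * v" if "x \<in> space M" for x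
    using Ub Vb that \<open>0 \<le> u\<close> by (simp add: abs_mult mult_mono')
  have bound: "\<bar>\<integral>x. W x \<partial>M\<bar> \<le> w" if "W \<in> borel_measurable M" "\<forall>x\<in>space M. \<bar>W x\<bar> \<le> w" for W :: "'a \<Rightarrow> real" and w
    using that by (intro order_trans[OF integral_abs_bound integral_le_const]
        integrable_abs integrable_const_bound[where B=w] AE_I2) auto
  have "\<bar>\<integral>x. U x * V x \<partial>M\<bar> \<le> u * v"
    using UVb Um Vm by (intro bound) auto
  moreover have "\<bar>(\<integral>x. U x \<partial>M) * (\<integral>x. V x \<partial>M)\<bar> \<le> u * v"
    unfolding abs_mult using bound[OF Um Ub] bound[OF Vm Vb] \<open>0 \<le> u\<close> by (intro mult_mono) auto
  ultimately show ?thesis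
    by linarith
qed

text \<open>Pairs at lag at most one are bounded crudely; this is where the constant 2 comes from.\<close>
lemma variance_sum_le_mixing:
  fixes G :: "nat \<Rightarrow> 'w \<Rightarrow> real" and \<alpha> :: "nat \<Rightarrow> real"
  assumes P: "prob_space M"
    and Gm: "\<And>i. G i \<in> borel_measurable M"
    and Gb: "\<And>i \<omega>. \<omega> \<in> space M \<Longrightarrow> \<bar>G i \<omega>\<bar> \<le> b"
    and cov: "\<And>i j. i + 2 \<le> j \<Longrightarrow>
       \<bar>(\<integral>\<omega>. G i \<omega> * G j \<omega> \<partial>M) - (\<integral>\<omega>. G i \<omega> \<partial>M) * (\<integral>\<omega>. G j \<omega> \<partial>M)\<bar> \<le> 4 * b\<^sup>2 * \<alpha> (j - i - 1)"
    and \<alpha>0: "\<And>k. 0 \<le> \<alpha> k" and sm: "summable (\<lambda>k. \<alpha> (Suc k))"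
  shows "(\<integral>\<omega>. ((\<Sum>i=1..n. G i \<omega>) - (\<integral>\<omega>. (\<Sum>i=1..n. G i \<omega>) \<partial>M))\<^sup>2 \<partial>M)
     \<le> real n * (8 * b\<^sup>2 * (2 + (\<Sum>k. \<alpha> (Suc k))))"
proof -
  interpret prob_space M by fact
  define \<gamma> where "\<gamma> = (\<lambda>d::nat. if d < 2 then 1 else \<alpha> (d - 1))"
  have \<gamma>0: "0 \<le> \<gamma> d" for d
    unfolding \<gamma>_def using \<alpha>0 by simp
  have "summable (\<lambda>d. \<gamma> (d + 2))"
    unfolding \<gamma>_def using sm by simp
  then have \<gamma>sm: "summable \<gamma>"
    by (rule summable_iff_shift[THEN iffD1])
  have \<gamma>sum: "suminf \<gamma> = 2 + (\<Sum>k. \<alpha> (Suc k))"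
    using suminf_split_initial_segment[OF \<gamma>sm, of 2] by (simp add: \<gamma>_def numeral_2_eq_2)
  define c where "c = (\<lambda>i j. (\<integral>\<omega>. G i \<omega> * G j \<omega> \<partial>M) - (\<integral>\<omega>. G i \<omega> \<partial>M) * (\<integral>\<omega>. G j \<omega> \<partial>M))"
  have c_bound: "\<bar>c i j\<bar> \<le> 4 * b\<^sup>2 * \<gamma> (j - i)" if "i \<le> j" for i j
  proof (cases "i + 2 \<le> j")
    case True
    then have "\<gamma> (j - i) = \<alpha> (j - i - 1)"
      by (simp add: \<gamma>_def)
    then show ?thesis
      using cov[OF True] by (simp add: c_def)
  next
    case False
    have "\<bar>c i j\<bar> \<le> 2 * b * b"
      unfolding c_def using Gb by (intro abs_covariance_le[OF P Gm Gm]) auto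
    moreover have "\<gamma> (j - i) = 1"
      using False by (simp add: \<gamma>_def)
    ultimately show ?thesis
      using zero_le_square[of b] by (simp add: power2_eq_square)
  qed
  have "(\<integral>\<omega>. ((\<Sum>i=1..n. G i \<omega>) - (\<integral>\<omega>. (\<Sum>i=1..n. G i \<omega>) \<partial>M))\<^sup>2 \<partial>M)
      = (\<Sum>i=1..n. \<Sum>j=1..n. c i j)"
    unfolding c_def by (rule variance_sum_eq_sum_covariance[OF P Gm Gb])
  also have "\<dots> \<le> real n * (2 * suminf (\<lambda>d. 4 * b\<^sup>2 * \<gamma> d))"
  proof (rule double_sum_le_summable)
    show "c i j = c j i" for i j
      by (simp add: c_def mult.commute)
  qed (use c_bound \<gamma>0 summable_mult[OF \<gamma>sm] in auto)
  also have "\<dots> = real n * (8 * b\<^sup>2 * (2 + (\<Sum>k. \<alpha> (Suc k))))"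
    using suminf_mult[OF \<gamma>sm] \<gamma>sum by simp
  finally show ?thesis .
qed

lemma variance_pair_sum_le_alpha_mix:
  fixes g :: "'a \<Rightarrow> 'a \<Rightarrow> real"
  assumes P: "prob_space \<Omega>" and Xm: "\<forall>i. X i \<in> measurable \<Omega> \<mu>"
    and gm: "case_prod g \<in> borel_measurable (\<mu> \<Otimes>\<^sub>M \<mu>)"
    and gb: "\<forall>x\<in>space \<mu>. \<forall>y\<in>space \<mu>. \<bar>g x y\<bar> \<le> b"
    and sm: "summable (\<lambda>k. alpha_mix \<Omega> \<mu> X (Suc k))"
    and S_def: "\<And>\<omega>. S \<omega> = (\<Sum>i=1..n. g (X (i - 1) \<omega>) (X i \<omega>))"
  shows "(\<integral>\<omega>. (S \<omega> - (\<integral>\<omega>. S \<omega> \<partial>\<Omega>))\<^sup>2 \<partial>\<Omega>)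
     \<le> real n * (8 * b\<^sup>2 * (2 + (\<Sum>k. alpha_mix \<Omega> \<mu> X (Suc k))))"
proof -
  define G where "G = (\<lambda>i \<omega>. g (X (i - 1) \<omega>) (X i \<omega>))"
  have Gm: "G i \<in> borel_measurable \<Omega>" for i
    using measurable_comp[OF measurable_Pair[OF Xm[rule_format] Xm[rule_format]] gm]
    by (simp add: G_def comp_def)
  have Gb: "\<bar>G i \<omega>\<bar> \<le> b" if "\<omega> \<in> space \<Omega>" for i \<omega>
    using gb measurable_space[OF Xm[rule_format] that] by (simp add: G_def)
  note cov = covariance_pair_function_le_alpha_mix[OF P Xm gm gb, of G, OF G_def[THEN fun_cong, THEN fun_cong]]
  from variance_sum_le_mixing[OF P Gm Gb cov alpha_mix_bounds(2)[OF P] sm]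
  show ?thesis
    by (simp add: S_def G_def)
qed

section \<open>Likelihood ratios of the Markov model\<close>

lemma PiM_space_memD:
  fixes n :: nat
  assumes "x \<in> space (PiM {0..n} (\<lambda>_. \<mu>))" and "i \<le> n"
  shows "x i \<in> space \<mu>"
  using assms unfolding space_PiM PiE_iff by (meson atLeastAtMost_iff le0)

lemma transition_prod_pos:
  fixes q :: "'a \<Rightarrow> 'a \<Rightarrow> real" and n :: nat
  assumes pos: "\<forall>x\<in>space \<mu>. \<forall>y\<in>space \<mu>. 0 < q x y"
    and x: "x \<in> space (PiM {0..n} (\<lambda>_. \<mu>))"
  shows "0 < (\<Prod>i\<in>{1..n}. q (x (i - 1)) (x i))"
proof (rule prod_pos)
  fix i assume "i \<in> {1..n}"
  then have "x (i - 1) \<in> space \<mu>" "x i \<in> space \<mu>"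
    using PiM_space_memD[OF x] by auto
  then show "0 < q (x (i - 1)) (x i)"
    using pos by blast
qed

lemma markov_dens_nonneg:
  assumes "\<forall>x\<in>space \<mu>. \<forall>y\<in>space \<mu>. 0 < p \<theta> x y"
    and "init_density \<mu> q0" and x: "x \<in> space (PiM {0..n} (\<lambda>_. \<mu>))"
  shows "0 \<le> markov_dens q0 p \<theta> n x"
  using transition_prod_pos[OF assms(1) x] assms(2) PiM_space_memD[OF x, of 0]
  by (simp add: markov_dens_def init_density_def)

lemma markov_dens_pos_iff:
  assumes "\<forall>x\<in>space \<mu>. \<forall>y\<in>space \<mu>. 0 < p \<theta> x y"
    and "init_density \<mu> q0" and x: "x \<in> space (PiM {0..n} (\<lambda>_. \<mu>))"
  shows "0 < markov_dens q0 p \<theta> n x \<longleftrightarrow> 0 < q0 (x 0)"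
  using transition_prod_pos[OF assms(1) x] assms(2) PiM_space_memD[OF x, of 0]
  by (simp add: markov_dens_def init_density_def zero_less_mult_iff)

lemma markov_dens_measurable:
  assumes "transition_density \<mu> p \<Theta>" and "init_density \<mu> q0" and "\<theta> \<in> \<Theta>"
  shows "markov_dens q0 p \<theta> n \<in> borel_measurable (PiM {0..n} (\<lambda>_. \<mu>))"
proof -
  have pm: "case_prod (p \<theta>) \<in> borel_measurable (\<mu> \<Otimes>\<^sub>M \<mu>)"
    and q0m: "q0 \<in> borel_measurable \<mu>"
    using assms unfolding transition_density_def init_density_def by auto
  have "(\<lambda>x. p \<theta> (x (i - 1)) (x i)) \<in> borel_measurable (PiM {0..n} (\<lambda>_. \<mu>))" if "i \<in> {1..n}" for i
  proof -
    have "i - 1 \<in> {0..n}" "i \<in> {0..n}"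
      using that by auto
    from measurable_comp[OF measurable_Pair[OF measurable_component_singleton[OF this(1)]
          measurable_component_singleton[OF this(2)]] pm]
    show ?thesis
      by (simp add: comp_def)
  qed
  moreover have "(\<lambda>x. q0 (x 0)) \<in> borel_measurable (PiM {0..n} (\<lambda>_. \<mu>))"
    using measurable_comp[OF measurable_component_singleton[of 0 "{0..n}"] q0m] by (simp add: comp_def)
  ultimately show ?thesis
    unfolding markov_dens_def by (intro borel_measurable_times borel_measurable_prod)
qed

lemma log_ratio_measurable:
  assumes "transition_density \<mu> p \<Theta>" and "init_density \<mu> q0" and "\<theta> \<in> \<Theta>" and "\<theta>0 \<in> \<Theta>"
  shows "log_ratio q0 p n \<theta> \<theta>0 \<in> borel_measurable (PiM {0..n} (\<lambda>_. \<mu>))"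
  using markov_dens_measurable[OF assms(1,2,3)] markov_dens_measurable[OF assms(1,2,4)]
  unfolding log_ratio_def[abs_def] by measurable

lemma log_ratio_eq_sum:
  assumes pos: "\<forall>x\<in>space \<mu>. \<forall>y\<in>space \<mu>. 0 < p \<theta> x y"
    and pos0: "\<forall>x\<in>space \<mu>. \<forall>y\<in>space \<mu>. 0 < p \<theta>0 x y"
    and x: "x \<in> space (PiM {0..n} (\<lambda>_. \<mu>))" and "0 < q0 (x 0)"
  shows "log_ratio q0 p n \<theta> \<theta>0 x = (\<Sum>i=1..n. ln (p \<theta>0 (x (i - 1)) (x i)) - ln (p \<theta> (x (i - 1)) (x i)))"
proof -
  have ln_prod: "ln (\<Prod>i\<in>{1..n}. p t (x (i - 1)) (x i)) = (\<Sum>i=1..n. ln (p t (x (i - 1)) (x i)))"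
    if "\<forall>x\<in>space \<mu>. \<forall>y\<in>space \<mu>. 0 < p t x y" for t
  proof (rule ln_prod)
    show "p t (x (i - 1)) (x i) \<noteq> 0" if "i \<in> {1..n}" for i
      using \<open>\<forall>x\<in>space \<mu>. \<forall>y\<in>space \<mu>. 0 < p t x y\<close> that
        PiM_space_memD[OF x, of i] PiM_space_memD[OF x, of "i - 1"] by force
  qed simp
  have "log_ratio q0 p n \<theta> \<theta>0 x
      = ln (\<Prod>i\<in>{1..n}. p \<theta>0 (x (i - 1)) (x i)) - ln (\<Prod>i\<in>{1..n}. p \<theta> (x (i - 1)) (x i))"
    using assms(4) transition_prod_pos[OF pos x] transition_prod_pos[OF pos0 x]
    unfolding log_ratio_def markov_dens_def by (simp add: ln_divide_pos)
  then show ?thesis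
    by (simp only: ln_prod[OF pos] ln_prod[OF pos0] sum_subtractf)
qed

text \<open>Where q0 vanishes both densities vanish, and the log-ratio is ln (0/0) = 0.\<close>
lemma abs_log_ratio_le:
  assumes pos: "\<forall>x\<in>space \<mu>. \<forall>y\<in>space \<mu>. 0 < p \<theta> x y"
    and pos0: "\<forall>x\<in>space \<mu>. \<forall>y\<in>space \<mu>. 0 < p \<theta>0 x y"
    and q0: "init_density \<mu> q0"
    and incr: "\<forall>x\<in>space \<mu>. \<forall>y\<in>space \<mu>. \<bar>ln (p \<theta>0 x y) - ln (p \<theta> x y)\<bar> \<le> b"
    and x: "x \<in> space (PiM {0..n} (\<lambda>_. \<mu>))"
  shows "\<bar>log_ratio q0 p n \<theta> \<theta>0 x\<bar> \<le> real n * b"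
proof (cases "0 < q0 (x 0)")
  case True
  have "\<bar>log_ratio q0 p n \<theta> \<theta>0 x\<bar>
      \<le> (\<Sum>i=1..n. \<bar>ln (p \<theta>0 (x (i - 1)) (x i)) - ln (p \<theta> (x (i - 1)) (x i))\<bar>)"
    unfolding log_ratio_eq_sum[OF pos pos0 x, of q0, OF True] by (rule sum_abs)
  also have "\<dots> \<le> (\<Sum>i=1..n. b)"
    using incr PiM_space_memD[OF x] by (intro sum_mono) auto
  finally show ?thesis
    by simp
next
  case False
  have "0 \<le> b"
    using incr PiM_space_memD[OF x, of 0] by fastforce
  moreover have "q0 (x 0) = 0"
    using False q0 PiM_space_memD[OF x, of 0] unfolding init_density_def by force
  ultimately show ?thesis
    by (simp add: log_ratio_def markov_dens_def)
qed

lemma density_markov_law_ratio: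
  assumes td: "transition_density \<mu> p \<Theta>" and q0: "init_density \<mu> q0"
    and \<theta>: "\<theta> \<in> \<Theta>" and \<theta>0: "\<theta>0 \<in> \<Theta>"
    and pos: "\<forall>x\<in>space \<mu>. \<forall>y\<in>space \<mu>. 0 < p \<theta> x y"
    and pos0: "\<forall>x\<in>space \<mu>. \<forall>y\<in>space \<mu>. 0 < p \<theta>0 x y"
  shows "density (markov_law \<mu> q0 p \<theta> n)
      (\<lambda>x. ennreal (markov_dens q0 p \<theta>0 n x / markov_dens q0 p \<theta> n x)) = markov_law \<mu> q0 p \<theta>0 n"
proof -
  let ?L = "PiM {0..n} (\<lambda>_. \<mu>)"
  let ?d = "markov_dens q0 p \<theta> n" and ?d' = "markov_dens q0 p \<theta>0 n"
  note markov_dens_measurable[OF td q0 \<theta>, measurable] markov_dens_measurable[OF td q0 \<theta>0, measurable]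
  have pointwise: "ennreal (?d x) * ennreal (?d' x / ?d x) = ennreal (?d' x)" if x: "x \<in> space ?L" for x
  proof (cases "0 < q0 (x 0)")
    case True
    then have "0 < ?d x" "0 < ?d' x"
      using markov_dens_pos_iff[where p=p and \<theta>=\<theta>, OF pos q0 x]
        markov_dens_pos_iff[where p=p and \<theta>=\<theta>0, OF pos0 q0 x] by simp_all
    then show ?thesis
      by (simp flip: ennreal_mult')
  next
    case False
    then have "q0 (x 0) = 0"
      using q0 PiM_space_memD[OF x, of 0] unfolding init_density_def by force
    then show ?thesis
      by (simp add: markov_dens_def)
  qed
  have "density (markov_law \<mu> q0 p \<theta> n) (\<lambda>x. ennreal (?d' x / ?d x))
      = density ?L (\<lambda>x. ennreal (?d x) * ennreal (?d' x / ?d x))"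
    unfolding markov_law_def by (rule density_density_eq) measurable
  also have "\<dots> = density ?L (\<lambda>x. ennreal (?d' x))"
  proof (rule density_cong)
    show "AE x in ?L. ennreal (?d x) * ennreal (?d' x / ?d x) = ennreal (?d' x)"
      using pointwise by (rule AE_I2)
  qed measurable
  finally show ?thesis
    unfolding markov_law_def .
qed

lemma KL_div_density_eq:
  assumes hm: "h \<in> borel_measurable P" and dens: "density P h = Q" and Q: "sigma_finite_measure Q"
    and f: "f \<in> borel_measurable Q" "integrable Q f"
    and ln_h: "AE x in Q. ln (enn2real (h x)) = f x"
  shows "KL_div Q P = ennreal (\<integral>x. f x \<partial>Q)"
proof -
  have sets: "sets Q = sets P"
    unfolding dens[symmetric] by simp
  have "AE x in P. h x = RN_deriv P Q x"
    by (rule RN_deriv_unique_sigma_finite[OF hm dens Q])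
  then have "AE x in Q. h x = RN_deriv P Q x"
    unfolding dens[symmetric] using AE_density[OF hm] by auto
  with ln_h have RN: "AE x in Q. ln (enn2real (RN_deriv P Q x)) = f x"
    by auto
  have "(\<lambda>x. ln (enn2real (RN_deriv P Q x))) \<in> borel_measurable P"
    by measurable
  then have RNm: "(\<lambda>x. ln (enn2real (RN_deriv P Q x))) \<in> borel_measurable Q"
    using sets by (simp cong: measurable_cong_sets)
  have "integrable Q (\<lambda>x. ln (enn2real (RN_deriv P Q x)))"
    by (rule integrable_cong_AE_imp[OF f(2) RNm]) (use RN in auto)
  moreover have "absolutely_continuous P Q"
    unfolding dens[symmetric] by (rule absolutely_continuousI_density[OF hm])
  moreover have "(\<integral>x. ln (enn2real (RN_deriv P Q x)) \<partial>Q) = (\<integral>x. f x \<partial>Q)"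
    by (rule integral_cong_AE[OF RNm f(1) RN])
  ultimately show ?thesis
    using sets by (simp add: KL_div_def)
qed

lemma KL_div_markov_law_le:
  assumes td: "transition_density \<mu> p \<Theta>" and q0: "init_density \<mu> q0"
    and \<theta>: "\<theta> \<in> \<Theta>" and \<theta>0: "\<theta>0 \<in> \<Theta>"
    and pos: "\<forall>x\<in>space \<mu>. \<forall>y\<in>space \<mu>. 0 < p \<theta> x y"
    and pos0: "\<forall>x\<in>space \<mu>. \<forall>y\<in>space \<mu>. 0 < p \<theta>0 x y"
    and P0: "prob_space (markov_law \<mu> q0 p \<theta>0 n)"
    and incr: "\<forall>x\<in>space \<mu>. \<forall>y\<in>space \<mu>. \<bar>ln (p \<theta>0 x y) - ln (p \<theta> x y)\<bar> \<le> b"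
  shows "KL_div (markov_law \<mu> q0 p \<theta>0 n) (markov_law \<mu> q0 p \<theta> n) \<le> ennreal (real n * b)"
proof -
  define P0 where "P0 = markov_law \<mu> q0 p \<theta>0 n"
  interpret P0: prob_space P0
    unfolding P0_def by (rule P0)
  have space0: "space P0 = space (PiM {0..n} (\<lambda>_. \<mu>))"
    by (simp add: P0_def markov_law_def)
  have bound: "\<bar>log_ratio q0 p n \<theta> \<theta>0 x\<bar> \<le> real n * b" if "x \<in> space P0" for x
    using abs_log_ratio_le[OF pos pos0 q0 incr] that by (simp add: space0)
  note markov_dens_measurable[OF td q0 \<theta>, measurable] markov_dens_measurable[OF td q0 \<theta>0, measurable]
  have lr: "log_ratio q0 p n \<theta> \<theta>0 \<in> borel_measurable P0"
    using log_ratio_measurable[OF td q0 \<theta> \<theta>0] by (simp add: P0_def markov_law_def)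
  then have int_lr: "integrable P0 (log_ratio q0 p n \<theta> \<theta>0)"
    using bound by (intro P0.integrable_const_bound[where B="real n * b"] AE_I2) auto
  have "KL_div P0 (markov_law \<mu> q0 p \<theta> n) = ennreal (\<integral>x. log_ratio q0 p n \<theta> \<theta>0 x \<partial>P0)"
    unfolding P0_def
  proof (rule KL_div_density_eq[OF _ density_markov_law_ratio[OF td q0 \<theta> \<theta>0 pos pos0]])
    show "(\<lambda>x. ennreal (markov_dens q0 p \<theta>0 n x / markov_dens q0 p \<theta> n x))
        \<in> borel_measurable (markov_law \<mu> q0 p \<theta> n)"
      by (simp add: markov_law_def)
    show "AE x in markov_law \<mu> q0 p \<theta>0 n.
        ln (enn2real (ennreal (markov_dens q0 p \<theta>0 n x / markov_dens q0 p \<theta> n x)))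
          = log_ratio q0 p n \<theta> \<theta>0 x"
      using markov_dens_nonneg[where p=p and \<theta>=\<theta>, OF pos q0]
        markov_dens_nonneg[where p=p and \<theta>=\<theta>0, OF pos0 q0]
      by (intro AE_I2) (simp add: log_ratio_def markov_law_def)
  qed (use P0.sigma_finite_measure lr int_lr in \<open>simp_all add: P0_def\<close>)
  moreover have "(\<integral>x. log_ratio q0 p n \<theta> \<theta>0 x \<partial>P0) \<le> real n * b"
    using int_lr by (intro P0.integral_le_const AE_I2) (auto simp: abs_le_iff dest!: bound)
  ultimately show ?thesis
    unfolding P0_def by (simp add: ennreal_leI)
qed

lemma prob_space_markov_law:
  assumes "prob_space \<Omega>" and "\<forall>i. X i \<in> measurable \<Omega> \<mu>"
    and "distr \<Omega> (PiM {0..n} (\<lambda>_. \<mu>)) (\<lambda>\<omega>. \<lambda>i\<in>{0..n}. X i \<omega>) = markov_law \<mu> q0 p \<theta> n"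
  shows "prob_space (markov_law \<mu> q0 p \<theta> n)"
  using assms by (metis measurable_restrict prob_space.prob_space_distr)

lemma AE_markov_law_init_pos:
  assumes td: "transition_density \<mu> p \<Theta>" and q0: "init_density \<mu> q0" and \<theta>: "\<theta> \<in> \<Theta>"
    and pos: "\<forall>x\<in>space \<mu>. \<forall>y\<in>space \<mu>. 0 < p \<theta> x y"
  shows "AE x in markov_law \<mu> q0 p \<theta> n. 0 < q0 (x 0)"
proof -
  have "(\<lambda>x. ennreal (markov_dens q0 p \<theta> n x)) \<in> borel_measurable (PiM {0..n} (\<lambda>_. \<mu>))"
    using markov_dens_measurable[OF td q0 \<theta>] by measurable
  moreover have "AE x in PiM {0..n} (\<lambda>_. \<mu>). 0 < ennreal (markov_dens q0 p \<theta> n x) \<longrightarrow> 0 < q0 (x 0)"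
    using markov_dens_pos_iff[where p=p and \<theta>=\<theta>, OF pos q0] by auto
  ultimately show ?thesis
    unfolding markov_law_def by (simp add: AE_density)
qed

lemma AE_chain_init_pos:
  assumes td: "transition_density \<mu> p \<Theta>" and q0: "init_density \<mu> q0" and \<theta>: "\<theta> \<in> \<Theta>"
    and pos: "\<forall>x\<in>space \<mu>. \<forall>y\<in>space \<mu>. 0 < p \<theta> x y"
    and P: "prob_space \<Omega>" and Xm: "\<forall>i. X i \<in> measurable \<Omega> \<mu>"
    and law: "distr \<Omega> (PiM {0..n} (\<lambda>_. \<mu>)) (\<lambda>\<omega>. \<lambda>i\<in>{0..n}. X i \<omega>) = markov_law \<mu> q0 p \<theta> n"
  shows "AE \<omega> in \<Omega>. 0 < q0 (X 0 \<omega>)"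
proof -
  have Y: "(\<lambda>\<omega>. \<lambda>i\<in>{0..n}. X i \<omega>) \<in> measurable \<Omega> (PiM {0..n} (\<lambda>_. \<mu>))"
    by (rule measurable_restrict) (use Xm in simp)
  have "q0 \<in> borel_measurable \<mu>"
    using q0 unfolding init_density_def by simp
  then have "{x \<in> space (PiM {0..n} (\<lambda>_. \<mu>)). 0 < q0 (x 0)} \<in> sets (PiM {0..n} (\<lambda>_. \<mu>))"
    by measurable
  then show ?thesis
    using AE_markov_law_init_pos[OF td q0 \<theta> pos, of n] AE_distr_iff[OF Y]
    unfolding law[symmetric] by simp
qed

lemma Var_nn_distr_eq:
  fixes S :: "'w \<Rightarrow> real"
  assumes "prob_space \<Omega>" and Y: "Y \<in> measurable \<Omega> L" and h: "h \<in> borel_measurable L"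
    and ae: "AE \<omega> in \<Omega>. h (Y \<omega>) = S \<omega>"
    and S: "S \<in> borel_measurable \<Omega>" and Sb: "\<forall>\<omega>\<in>space \<Omega>. \<bar>S \<omega>\<bar> \<le> c"
  shows "Var_nn (distr \<Omega> L Y) h = ennreal (\<integral>\<omega>. (S \<omega> - (\<integral>\<omega>. S \<omega> \<partial>\<Omega>))\<^sup>2 \<partial>\<Omega>)"
proof -
  interpret prob_space \<Omega> by fact
  note Y[measurable] h[measurable] S[measurable]
  define e where "e = (\<integral>\<omega>. S \<omega> \<partial>\<Omega>)"
  have mean: "(\<integral>x. h x \<partial>distr \<Omega> L Y) = e"
    unfolding e_def using ae by (simp add: integral_distr integral_cong_AE)
  have "integrable \<Omega> (\<lambda>\<omega>. (S \<omega> - e)\<^sup>2)"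
  proof (intro integrable_const_bound[where B="(c + \<bar>e\<bar>)\<^sup>2"] AE_I2)
    show "norm ((S \<omega> - e)\<^sup>2) \<le> (c + \<bar>e\<bar>)\<^sup>2" if "\<omega> \<in> space \<Omega>" for \<omega>
    proof -
      have "\<bar>S \<omega> - e\<bar> \<le> c + \<bar>e\<bar>"
        using Sb that by fastforce
      then have "\<bar>S \<omega> - e\<bar>\<^sup>2 \<le> (c + \<bar>e\<bar>)\<^sup>2"
        by (rule power_mono) simp
      then show ?thesis
        by simp
    qed
  qed measurable
  then have "(\<integral>\<^sup>+\<omega>. ennreal ((S \<omega> - e)\<^sup>2) \<partial>\<Omega>) = ennreal (\<integral>\<omega>. (S \<omega> - e)\<^sup>2 \<partial>\<Omega>)"
    by (rule nn_integral_eq_integral) simp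
  moreover have "(\<integral>\<^sup>+x. ennreal ((h x - e)\<^sup>2) \<partial>distr \<Omega> L Y) = (\<integral>\<^sup>+\<omega>. ennreal ((S \<omega> - e)\<^sup>2) \<partial>\<Omega>)"
    using ae by (simp add: nn_integral_distr) (auto intro: nn_integral_cong_AE)
  ultimately show ?thesis
    unfolding Var_nn_def mean e_def by simp
qed

lemma Var_nn_log_ratio_le:
  assumes td: "transition_density \<mu> p \<Theta>" and q0: "init_density \<mu> q0"
    and \<theta>: "\<theta> \<in> \<Theta>" and \<theta>0: "\<theta>0 \<in> \<Theta>"
    and pos: "\<forall>x\<in>space \<mu>. \<forall>y\<in>space \<mu>. 0 < p \<theta> x y"
    and pos0: "\<forall>x\<in>space \<mu>. \<forall>y\<in>space \<mu>. 0 < p \<theta>0 x y"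
    and P: "prob_space \<Omega>" and Xm: "\<forall>i. X i \<in> measurable \<Omega> \<mu>"
    and law: "distr \<Omega> (PiM {0..n} (\<lambda>_. \<mu>)) (\<lambda>\<omega>. \<lambda>i\<in>{0..n}. X i \<omega>) = markov_law \<mu> q0 p \<theta>0 n"
    and incr: "\<forall>x\<in>space \<mu>. \<forall>y\<in>space \<mu>. \<bar>ln (p \<theta>0 x y) - ln (p \<theta> x y)\<bar> \<le> b"
    and sm: "summable (\<lambda>k. alpha_mix \<Omega> \<mu> X (Suc k))"
  shows "Var_nn (markov_law \<mu> q0 p \<theta>0 n) (log_ratio q0 p n \<theta> \<theta>0)
     \<le> ennreal (real n * (8 * b\<^sup>2 * (2 + (\<Sum>k. alpha_mix \<Omega> \<mu> X (Suc k)))))"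
proof -
  interpret prob_space \<Omega> by fact
  define L where "L = PiM {0..n} (\<lambda>_. \<mu>)"
  define Y where "Y = (\<lambda>\<omega>. \<lambda>i\<in>{0..n}. X i \<omega>)"
  define g where "g = (\<lambda>x y. ln (p \<theta>0 x y) - ln (p \<theta> x y))"
  define S where "S = (\<lambda>\<omega>. \<Sum>i=1..n. g (X (i - 1) \<omega>) (X i \<omega>))"
  have Y[measurable]: "Y \<in> measurable \<Omega> L"
    unfolding Y_def L_def by (rule measurable_restrict) (use Xm in simp)
  have "case_prod (p t) \<in> borel_measurable (\<mu> \<Otimes>\<^sub>M \<mu>)" if "t \<in> \<Theta>" for t
    using td that unfolding transition_density_def by blast
  note this[OF \<theta>, measurable] this[OF \<theta>0, measurable]
  have gm: "case_prod g \<in> borel_measurable (\<mu> \<Otimes>\<^sub>M \<mu>)"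
    unfolding g_def by measurable
  have Sm: "S \<in> borel_measurable \<Omega>"
    using measurable_comp[OF measurable_Pair[OF Xm[rule_format] Xm[rule_format]] gm]
    unfolding S_def by (simp add: comp_def)
  have Sb: "\<bar>S \<omega>\<bar> \<le> real n * b" if "\<omega> \<in> space \<Omega>" for \<omega>
  proof -
    have "\<bar>S \<omega>\<bar> \<le> (\<Sum>i=1..n. \<bar>g (X (i - 1) \<omega>) (X i \<omega>)\<bar>)"
      unfolding S_def by (rule sum_abs)
    also have "\<dots> \<le> (\<Sum>i=1..n. b)"
      using incr measurable_space[OF Xm[rule_format] that] by (intro sum_mono) (simp add: g_def)
    finally show ?thesis
      by simp
  qed
  have "AE \<omega> in \<Omega>. 0 < q0 (Y \<omega> 0)"
    using AE_chain_init_pos[OF td q0 \<theta>0 pos0 P Xm law] by (simp add: Y_def)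
  then have ae: "AE \<omega> in \<Omega>. log_ratio q0 p n \<theta> \<theta>0 (Y \<omega>) = S \<omega>"
  proof (rule AE_mp, intro AE_I2 impI)
    fix \<omega> assume "\<omega> \<in> space \<Omega>" and "0 < q0 (Y \<omega> 0)"
    then show "log_ratio q0 p n \<theta> \<theta>0 (Y \<omega>) = S \<omega>"
      using log_ratio_eq_sum[OF pos pos0 measurable_space[OF Y[unfolded L_def]], of \<omega> q0]
      by (auto simp: S_def g_def Y_def intro!: sum.cong)
  qed
  have "Var_nn (markov_law \<mu> q0 p \<theta>0 n) (log_ratio q0 p n \<theta> \<theta>0)
      = ennreal (\<integral>\<omega>. (S \<omega> - (\<integral>\<omega>. S \<omega> \<partial>\<Omega>))\<^sup>2 \<partial>\<Omega>)"
    unfolding law[folded Y_def L_def, symmetric]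
    by (rule Var_nn_distr_eq[where c="real n * b"])
      (use P Y ae Sm Sb log_ratio_measurable[OF td q0 \<theta> \<theta>0] in \<open>auto simp: L_def\<close>)
  also have "\<dots> \<le> ennreal (real n * (8 * b\<^sup>2 * (2 + (\<Sum>k. alpha_mix \<Omega> \<mu> X (Suc k)))))"
    using incr by (intro ennreal_leI variance_pair_sum_le_alpha_mix[OF P Xm gm _ sm])
      (simp_all add: S_def g_def)
  finally show ?thesis .
qed

section \<open>Integration against the variational family\<close>

lemma abs_ln_transition_diff_le:
  fixes M :: "nat \<Rightarrow> 'a \<Rightarrow> 'a \<Rightarrow> real" and f :: "nat \<Rightarrow> 'p \<Rightarrow> 'p \<Rightarrow> real"
    and p :: "'p \<Rightarrow> 'a \<Rightarrow> 'a \<Rightarrow> real"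
  assumes Mbd: "\<forall>k\<in>{1..m}. \<forall>x\<in>space \<mu>. \<forall>y\<in>space \<mu>. \<bar>M k y x\<bar> \<le> B"
    and lip: "\<forall>\<theta>1\<in>\<Theta>. \<forall>\<theta>2\<in>\<Theta>. \<forall>x\<in>space \<mu>. \<forall>y\<in>space \<mu>.
                \<bar>ln (p \<theta>1 x y) - ln (p \<theta>2 x y)\<bar> \<le> (\<Sum>k=1..m. M k y x * \<bar>f k \<theta>2 \<theta>1\<bar>)"
    and "\<theta> \<in> \<Theta>" and "\<theta>0 \<in> \<Theta>"
  shows "\<forall>x\<in>space \<mu>. \<forall>y\<in>space \<mu>.
           \<bar>ln (p \<theta>0 x y) - ln (p \<theta> x y)\<bar> \<le> max B 0 * (\<Sum>k=1..m. \<bar>f k \<theta> \<theta>0\<bar>)"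
proof (intro ballI)
  fix x y assume xy: "x \<in> space \<mu>" "y \<in> space \<mu>"
  have "\<bar>ln (p \<theta>0 x y) - ln (p \<theta> x y)\<bar> \<le> (\<Sum>k=1..m. M k y x * \<bar>f k \<theta> \<theta>0\<bar>)"
    using lip assms(3,4) xy by blast
  also have "\<dots> \<le> (\<Sum>k=1..m. max B 0 * \<bar>f k \<theta> \<theta>0\<bar>)"
  proof (rule sum_mono)
    show "M k y x * \<bar>f k \<theta> \<theta>0\<bar> \<le> max B 0 * \<bar>f k \<theta> \<theta>0\<bar>" if "k \<in> {1..m}" for k
      using Mbd xy that by (intro mult_right_mono) force+
  qed
  finally show "\<bar>ln (p \<theta>0 x y) - ln (p \<theta> x y)\<bar> \<le> max B 0 * (\<Sum>k=1..m. \<bar>f k \<theta> \<theta>0\<bar>)"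
    by (simp add: sum_distrib_left)
qed

lemma power2_le_abs_plus_abs_powr:
  fixes x \<delta> :: real
  assumes "0 < \<delta>"
  shows "x\<^sup>2 \<le> \<bar>x\<bar> + \<bar>x\<bar> powr (2 + \<delta>)"
proof (cases "\<bar>x\<bar> \<le> 1")
  case True
  have "x\<^sup>2 = \<bar>x\<bar> * \<bar>x\<bar>"
    by (simp add: power2_eq_square)
  also have "\<dots> \<le> \<bar>x\<bar>"
    using True by (intro mult_left_le_one_le) auto
  finally show ?thesis
    using powr_ge_zero[of "\<bar>x\<bar>" "2 + \<delta>"] by linarith
next
  case False
  then have "x\<^sup>2 = \<bar>x\<bar> powr 2"
    by simp
  also have "\<dots> \<le> \<bar>x\<bar> powr (2 + \<delta>)"
    using False assms by (intro powr_mono) auto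
  finally show ?thesis
    by simp
qed

lemma nn_integral_sum_le:
  fixes h :: "nat \<Rightarrow> 'a \<Rightarrow> real"
  assumes "\<And>k. k \<in> A \<Longrightarrow> h k \<in> borel_measurable N" and "\<And>k x. 0 \<le> h k x"
    and "\<And>k. k \<in> A \<Longrightarrow> (\<integral>\<^sup>+x. ennreal (h k x) \<partial>N) \<le> ennreal c" and "0 \<le> c"
  shows "(\<integral>\<^sup>+x. ennreal (\<Sum>k\<in>A. h k x) \<partial>N) \<le> ennreal (real (card A) * c)"
proof -
  have "(\<integral>\<^sup>+x. ennreal (\<Sum>k\<in>A. h k x) \<partial>N) = (\<Sum>k\<in>A. \<integral>\<^sup>+x. ennreal (h k x) \<partial>N)"
    using assms(1,2) by (simp add: nn_integral_sum flip: sum_ennreal)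
  also have "\<dots> \<le> (\<Sum>k\<in>A. ennreal c)"
    using assms(3) by (rule sum_mono)
  finally show ?thesis
    using assms(4) by (simp add: ennreal_mult ennreal_of_nat_eq_real_of_nat)
qed

lemma nn_integral_le_cmult:
  assumes "\<And>x. x \<in> space N \<Longrightarrow> G x \<le> ennreal (a * H x)"
    and "H \<in> borel_measurable N" and "\<And>x. 0 \<le> H x" and "0 \<le> a"
    and "(\<integral>\<^sup>+x. ennreal (H x) \<partial>N) \<le> ennreal c"
  shows "(\<integral>\<^sup>+x. G x \<partial>N) \<le> ennreal (a * c)"
proof -
  have "(\<integral>\<^sup>+x. G x \<partial>N) \<le> (\<integral>\<^sup>+x. ennreal a * ennreal (H x) \<partial>N)"
    using assms(1,3,4) by (intro nn_integral_mono) (simp add: ennreal_mult)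
  also have "\<dots> = ennreal a * (\<integral>\<^sup>+x. ennreal (H x) \<partial>N)"
    using assms(2) by (simp add: nn_integral_cmult)
  also have "\<dots> \<le> ennreal a * ennreal c"
    using assms(5) by (rule mult_left_mono) simp
  finally show ?thesis
    using assms(4) by (simp add: ennreal_mult')
qed

lemma nn_integral_power2_sum_abs_le:
  fixes g :: "nat \<Rightarrow> 'a \<Rightarrow> real"
  assumes gm: "\<And>k. k \<in> A \<Longrightarrow> g k \<in> borel_measurable N" and "0 < \<delta>"
    and mom1: "\<And>k. k \<in> A \<Longrightarrow> (\<integral>\<^sup>+x. ennreal \<bar>g k x\<bar> \<partial>N) \<le> ennreal c1"
    and mom2: "\<And>k. k \<in> A \<Longrightarrow> (\<integral>\<^sup>+x. ennreal (\<bar>g k x\<bar> powr (2 + \<delta>)) \<partial>N) \<le> ennreal c2"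
    and "0 \<le> c1" and "0 \<le> c2"
  shows "(\<integral>\<^sup>+x. ennreal ((\<Sum>k\<in>A. \<bar>g k x\<bar>)\<^sup>2) \<partial>N) \<le> ennreal (real (card A) * (real (card A) * (c1 + c2)))"
proof (rule nn_integral_le_cmult)
  let ?h = "\<lambda>k x. \<bar>g k x\<bar> + \<bar>g k x\<bar> powr (2 + \<delta>)"
  show "ennreal ((\<Sum>k\<in>A. \<bar>g k x\<bar>)\<^sup>2) \<le> ennreal (real (card A) * (\<Sum>k\<in>A. ?h k x))" for x
  proof (rule ennreal_leI)
    have "(\<Sum>k\<in>A. \<bar>g k x\<bar>)\<^sup>2 \<le> real (card A) * (\<Sum>k\<in>A. \<bar>g k x\<bar>\<^sup>2)"
      using Cauchy_Schwarz_ineq_sum[of "\<lambda>k. \<bar>g k x\<bar>" "\<lambda>_. 1" A] by (simp add: mult.commute)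
    also have "\<dots> \<le> real (card A) * (\<Sum>k\<in>A. ?h k x)"
      using power2_le_abs_plus_abs_powr[OF \<open>0 < \<delta>\<close>] by (intro mult_left_mono sum_mono) auto
    finally show "(\<Sum>k\<in>A. \<bar>g k x\<bar>)\<^sup>2 \<le> real (card A) * (\<Sum>k\<in>A. ?h k x)" .
  qed
  have hm: "?h k \<in> borel_measurable N" if "k \<in> A" for k
    using gm[OF that] by measurable
  then show "(\<lambda>x. \<Sum>k\<in>A. ?h k x) \<in> borel_measurable N"
    by (rule borel_measurable_sum)
  show "(\<integral>\<^sup>+x. ennreal (\<Sum>k\<in>A. ?h k x) \<partial>N) \<le> ennreal (real (card A) * (c1 + c2))"
  proof (rule nn_integral_sum_le[OF hm])
    fix k assume "k \<in> A"
    have "(\<integral>\<^sup>+x. ennreal (?h k x) \<partial>N)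
        = (\<integral>\<^sup>+x. ennreal \<bar>g k x\<bar> \<partial>N) + (\<integral>\<^sup>+x. ennreal (\<bar>g k x\<bar> powr (2 + \<delta>)) \<partial>N)"
      using gm[OF \<open>k \<in> A\<close>] by (simp add: ennreal_plus nn_integral_add)
    also have "\<dots> \<le> ennreal (c1 + c2)"
      using mom1[OF \<open>k \<in> A\<close>] mom2[OF \<open>k \<in> A\<close>] assms(5,6) by (simp add: ennreal_plus add_mono)
    finally show "(\<integral>\<^sup>+x. ennreal (?h k x) \<partial>N) \<le> ennreal (c1 + c2)" .
  qed (use assms(5,6) in auto)
qed (auto intro: sum_nonneg)

lemma mult_divide_sqrt:
  fixes t x :: real
  assumes "0 \<le> t"
  shows "t * (x / sqrt t) = x * sqrt t"
proof (cases "t = 0")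
  case False
  then show ?thesis
    using assms real_sqrt_mult_self[of t] by (simp add: field_simps)
qed simp

lemma divide_le_divide_sqrt:
  fixes x :: real
  assumes "1 \<le> t" and "0 \<le> x"
  shows "x / t \<le> x / sqrt t"
proof -
  have "t \<le> t\<^sup>2"
    using mult_right_mono[of 1 t t] assms(1) by (simp add: power2_eq_square)
  then show ?thesis
    using assms by (intro divide_left_mono real_le_lsqrt) auto
qed

lemma exists_rate_of_sqrt_bounds:
  fixes a b d :: "nat \<Rightarrow> ennreal"
  assumes "\<And>n. 1 \<le> n \<Longrightarrow> a n \<le> ennreal (real n * (c1 / sqrt (real n)))"
    and "\<And>n. 1 \<le> n \<Longrightarrow> b n \<le> ennreal (real n * (c2 / sqrt (real n)))"
    and "\<And>n. 1 \<le> n \<Longrightarrow> d n \<le> ennreal (real n * (c3 / sqrt (real n)))"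
    and "0 \<le> c1" "0 \<le> c2" "0 \<le> c3"
  shows "\<exists>\<epsilon> :: nat \<Rightarrow> real.
           (\<exists>K. \<forall>n\<ge>1. \<epsilon> n \<le> K * max (1 / sqrt (real n)) (real n powr (\<delta> / 2) / real n))
         \<and> (\<forall>n\<ge>1. a n \<le> ennreal (real n * \<epsilon> n) \<and> b n \<le> ennreal (real n * \<epsilon> n)
              \<and> d n \<le> ennreal (real n * \<epsilon> n))"
proof (intro exI[of _ "\<lambda>n. (c1 + c2 + c3) / sqrt (real n)"] conjI allI impI)
  let ?K = "c1 + c2 + c3"
  show "\<exists>K. \<forall>n\<ge>1. ?K / sqrt (real n) \<le> K * max (1 / sqrt (real n)) (real n powr (\<delta> / 2) / real n)"
  proof (intro exI[of _ ?K] allI impI)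
    fix n :: nat
    have "?K * (1 / sqrt (real n)) \<le> ?K * max (1 / sqrt (real n)) (real n powr (\<delta> / 2) / real n)"
      using assms(4-6) by (intro mult_left_mono) auto
    then show "?K / sqrt (real n) \<le> ?K * max (1 / sqrt (real n)) (real n powr (\<delta> / 2) / real n)"
      by simp
  qed
  have "ennreal (real n * (c / sqrt (real n))) \<le> ennreal (real n * (?K / sqrt (real n)))"
    if "c \<le> ?K" for c n
    using that by (intro ennreal_leI mult_left_mono divide_right_mono) auto
  then show "a n \<le> ennreal (real n * (?K / sqrt (real n)))"
    and "b n \<le> ennreal (real n * (?K / sqrt (real n)))"
    and "d n \<le> ennreal (real n * (?K / sqrt (real n)))" if "1 \<le> n" for n
    using assms that by (meson add_increasing add_increasing2 order_refl order_trans)+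
qed

theorem mainTheorem9:
  fixes \<mu> :: "'a measure"
    and \<Theta> :: "(real^'d) set"
    and p :: "real^'d \<Rightarrow> 'a \<Rightarrow> 'a \<Rightarrow> real"
    and q0 :: "'a \<Rightarrow> real"
    and \<theta>0 :: "real^'d"
    and \<Omega> :: "'w measure"
    and X :: "nat \<Rightarrow> 'w \<Rightarrow> 'a"
    and \<pi> :: "(real^'d) measure"
    and \<F> :: "(real^'d) measure set"
    and \<rho> :: "nat \<Rightarrow> (real^'d) measure"
    and \<delta> B C :: real
    and m :: nat
    and M :: "nat \<Rightarrow> 'a \<Rightarrow> 'a \<Rightarrow> real"
    and f :: "nat \<Rightarrow> real^'d \<Rightarrow> real^'d \<Rightarrow> real"
  assumes sf: "sigma_finite_measure \<mu>"
    and td: "transition_density \<mu> p \<Theta>"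
    and pos: "\<forall>\<theta>\<in>\<Theta>. \<forall>x\<in>space \<mu>. \<forall>y\<in>space \<mu>. p \<theta> x y > 0"
    and q0: "init_density \<mu> q0"
    and th0: "\<theta>0 \<in> \<Theta>"
    (* the chain generated under theta0 *)
    and PO: "prob_space \<Omega>"
    and Xmeas: "\<forall>i. X i \<in> measurable \<Omega> \<mu>"
    and Xlaw: "\<forall>n. distr \<Omega> (PiM {0..n} (\<lambda>_. \<mu>)) (\<lambda>\<omega>. \<lambda>i\<in>{0..n}. X i \<omega>)
                     = markov_law \<mu> q0 p \<theta>0 n"
    and dpos: "\<delta> > 0"
    and mix: "summable (\<lambda>k. alpha_mix \<Omega> \<mu> X (Suc k) powr (\<delta> / (2 + \<delta>)))"
    (* parameter space measures *)
    and pi: "prob_space \<pi>" "sets \<pi> = sets (restrict_space borel \<Theta>)"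
    and rhoF: "\<forall>n. \<rho> n \<in> \<F>"
    and rho: "\<forall>n. prob_space (\<rho> n) \<and> sets (\<rho> n) = sets (restrict_space borel \<Theta>)"
    and fmeas: "\<forall>k\<in>{1..m}. (\<lambda>\<theta>. f k \<theta> \<theta>0) \<in> borel_measurable (restrict_space borel \<Theta>)"
    (* Lipschitz-type condition *)
    and Mbd: "\<forall>k\<in>{1..m}. \<forall>x\<in>space \<mu>. \<forall>y\<in>space \<mu>. \<bar>M k y x\<bar> \<le> B"
    and lip: "\<forall>\<theta>1\<in>\<Theta>. \<forall>\<theta>2\<in>\<Theta>. \<forall>x\<in>space \<mu>. \<forall>y\<in>space \<mu>.
                \<bar>ln (p \<theta>1 x y) - ln (p \<theta>2 x y)\<bar> \<le> (\<Sum>k=1..m. M k y x * \<bar>f k \<theta>2 \<theta>1\<bar>)"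
    and Cpos: "C > 0"
    and mom1: "\<forall>k\<in>{1..m}. \<forall>n\<ge>1.
                 (\<integral>\<^sup>+\<theta>. ennreal (\<bar>f k \<theta> \<theta>0\<bar> powr (2 + \<delta>)) \<partial>\<rho> n) \<le> ennreal (C / real n)"
    and mom2: "\<forall>k\<in>{1..m}. \<forall>n\<ge>1.
                 (\<integral>\<^sup>+\<theta>. ennreal \<bar>f k \<theta> \<theta>0\<bar> \<partial>\<rho> n) \<le> ennreal (C / sqrt (real n))"
    and KLrho: "\<forall>n\<ge>1. KL_div (\<rho> n) \<pi> \<le> ennreal (C * sqrt (real n))"
  shows "\<exists>\<epsilon> :: nat \<Rightarrow> real.
           (\<exists>K. \<forall>n\<ge>1. \<epsilon> n \<le> K * max (1 / sqrt (real n)) (real n powr (\<delta> / 2) / real n))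
         \<and> (\<forall>n\<ge>1.
              (\<integral>\<^sup>+\<theta>. KL_div (markov_law \<mu> q0 p \<theta>0 n) (markov_law \<mu> q0 p \<theta> n) \<partial>\<rho> n)
                 \<le> ennreal (real n * \<epsilon> n)
            \<and> (\<integral>\<^sup>+\<theta>. Var_nn (markov_law \<mu> q0 p \<theta>0 n) (log_ratio q0 p n \<theta> \<theta>0) \<partial>\<rho> n)
                 \<le> ennreal (real n * \<epsilon> n)
            \<and> KL_div (\<rho> n) \<pi> \<le> ennreal (real n * \<epsilon> n))"
proof -
  define Bp where "Bp = max B 0"
  define F where "F = (\<lambda>\<theta>. \<Sum>k=1..m. \<bar>f k \<theta> \<theta>0\<bar>)"
  define \<Gamma> where "\<Gamma> = 2 + (\<Sum>k. alpha_mix \<Omega> \<mu> X (Suc k))"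
  have sm: "summable (\<lambda>k. alpha_mix \<Omega> \<mu> X (Suc k))"
    by (rule summable_alpha_mix[OF PO dpos mix])
  have Bp0: "0 \<le> Bp" and F0: "\<And>\<theta>. 0 \<le> F \<theta>" and \<Gamma>0: "0 \<le> \<Gamma>"
    using suminf_nonneg[OF sm] alpha_mix_bounds(2)[OF PO]
    by (fastforce simp: Bp_def F_def \<Gamma>_def sum_nonneg)+
  have pos_at: "\<forall>x\<in>space \<mu>. \<forall>y\<in>space \<mu>. 0 < p \<theta> x y" if "\<theta> \<in> \<Theta>" for \<theta>
    using pos that by blast
  have incr: "\<forall>x\<in>space \<mu>. \<forall>y\<in>space \<mu>. \<bar>ln (p \<theta>0 x y) - ln (p \<theta> x y)\<bar> \<le> Bp * F \<theta>"
    if "\<theta> \<in> \<Theta>" for \<theta>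
    unfolding Bp_def F_def by (rule abs_ln_transition_diff_le[OF Mbd lip that th0])
  have space_rho: "space (\<rho> n) = \<Theta>" for n
    using rho sets_eq_imp_space_eq[of "\<rho> n" "restrict_space borel \<Theta>"] by (simp add: space_restrict_space)
  have fm: "(\<lambda>\<theta>. f k \<theta> \<theta>0) \<in> borel_measurable (\<rho> n)" if "k \<in> {1..m}" for k n
    using fmeas that rho by (simp cong: measurable_cong_sets)
  then have Fm: "F \<in> borel_measurable (\<rho> n)" for n
    unfolding F_def by measurable
  have KL: "KL_div (markov_law \<mu> q0 p \<theta>0 n) (markov_law \<mu> q0 p \<theta> n) \<le> ennreal (real n * Bp * F \<theta>)"
    if "\<theta> \<in> space (\<rho> n)" for \<theta> n
    using that KL_div_markov_law_le[OF td q0 _ th0 pos_at pos_at[OF th0]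
        prob_space_markov_law[OF PO Xmeas Xlaw[rule_format]] incr]
    by (simp add: space_rho mult.assoc)
  have Var: "Var_nn (markov_law \<mu> q0 p \<theta>0 n) (log_ratio q0 p n \<theta> \<theta>0)
      \<le> ennreal (real n * 8 * Bp\<^sup>2 * \<Gamma> * (F \<theta>)\<^sup>2)" if "\<theta> \<in> space (\<rho> n)" for \<theta> n
    using that Var_nn_log_ratio_le[OF td q0 _ th0 pos_at pos_at[OF th0] PO Xmeas
        Xlaw[rule_format] incr sm]
    by (simp add: space_rho \<Gamma>_def power_mult_distrib mult_ac)
  have moment1: "(\<integral>\<^sup>+\<theta>. ennreal (F \<theta>) \<partial>\<rho> n) \<le> ennreal (real m * (C / sqrt (real n)))"
    if "1 \<le> n" for n
    using nn_integral_sum_le[of "{1..m}" "\<lambda>k \<theta>. \<bar>f k \<theta> \<theta>0\<bar>" "\<rho> n" "C / sqrt (real n)"]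
      fm mom2 that Cpos by (simp add: F_def)
  have moment2: "(\<integral>\<^sup>+\<theta>. ennreal ((F \<theta>)\<^sup>2) \<partial>\<rho> n) \<le> ennreal (real m * (real m * (2 * C / sqrt (real n))))"
    if n: "1 \<le> n" for n
  proof -
    have "C / real n \<le> C / sqrt (real n)"
      using n Cpos by (intro divide_le_divide_sqrt) auto
    then have mom1': "(\<integral>\<^sup>+\<theta>. ennreal (\<bar>f k \<theta> \<theta>0\<bar> powr (2 + \<delta>)) \<partial>\<rho> n) \<le> ennreal (C / sqrt (real n))"
      if "k \<in> {1..m}" for k
      using mom1 n that by (meson ennreal_leI order_trans)
    have "(\<integral>\<^sup>+\<theta>. ennreal ((F \<theta>)\<^sup>2) \<partial>\<rho> n)
        \<le> ennreal (real (card {1..m}) * (real (card {1..m}) * (C / sqrt (real n) + C / sqrt (real n))))"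
      unfolding F_def by (rule nn_integral_power2_sum_abs_le[OF fm dpos _ mom1']) (use mom2 n Cpos in auto)
    then show ?thesis
      by simp
  qed
  have "(\<integral>\<^sup>+\<theta>. KL_div (markov_law \<mu> q0 p \<theta>0 n) (markov_law \<mu> q0 p \<theta> n) \<partial>\<rho> n)
      \<le> ennreal (real n * (Bp * real m * C / sqrt (real n)))" if "1 \<le> n" for n
    using nn_integral_le_cmult[OF KL[of _ n] Fm F0 _ moment1[OF that]] Bp0 by (simp add: mult_ac)
  moreover have "(\<integral>\<^sup>+\<theta>. Var_nn (markov_law \<mu> q0 p \<theta>0 n) (log_ratio q0 p n \<theta> \<theta>0) \<partial>\<rho> n)
      \<le> ennreal (real n * (16 * Bp\<^sup>2 * \<Gamma> * (real m)\<^sup>2 * C / sqrt (real n)))" if "1 \<le> n" for n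
    using nn_integral_le_cmult[OF Var[of _ n] _ _ _ moment2[OF that]] Fm Bp0 \<Gamma>0
    by (simp add: power2_eq_square mult_ac)
  moreover have "KL_div (\<rho> n) \<pi> \<le> ennreal (real n * (C / sqrt (real n)))" if "1 \<le> n" for n
    unfolding mult_divide_sqrt[OF of_nat_0_le_iff] using KLrho that by blast
  ultimately show ?thesis
    by (rule exists_rate_of_sqrt_bounds) (use Bp0 \<Gamma>0 Cpos in auto)
qed

end
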